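(* Let $G$ be a partial cube and let $f$ be a $\Theta$-graceful labeling of $G$. Let $C$ be an isometric $4$-cycle of $G$. Then for every two edges $xy$ and $uv$ of $C$ with $xy\,\Theta\,uv$, the following holds: $$d(x,u) < d(x,v) \ \Rightarrow\ f(x)+f(v) = f(y)+f(u),$$ where $d$ denotes the shortest-path distance in $G$.
   Context: A subgraph $H$ of a graph $G$ is isometric if $d_H(u,v)=d_G(u,v)$ for all vertices $u,v$ of $H$. A partial cube is a graph isomorphic to an isometric subgraph of some hypercube $Q_d$ (vertices: binary $d$-tuples, adjacent iff they differ in exactly one coordinate). The Djoković–Winkler relation $\Theta$ on the edges of $G$: edges $xy$ and $uv$ satisfy $xy\,\Theta\,uv$ iff $d(x,u)+d(y,v)\neq d(x,v)+d(y,u)$. On a partial cube $\Theta$ is an equivalence relation; its classes are called $\Theta$-classes. For a partial cube $G$ on $n$ vertices, a bijection $f:V(G)\to\{0,1,\ldots,n-1\}$ is a $\Theta$-graceful labeling if, labeling each edge $xy$ by $|f(x)-f(y)|$, all edges in the same $\Theta$-class receive the same label and distinct $\Theta$-classes receive distinct labels. *)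

theory Defs
  imports Main
begin

definition simple_graph :: "'a set \<Rightarrow> ('a \<Rightarrow> 'a \<Rightarrow> bool) \<Rightarrow> bool" where
  "simple_graph V E \<longleftrightarrow> finite V \<and> (\<forall>u v. E u v \<longrightarrow> u \<in> V \<and> v \<in> V \<and> u \<noteq> v \<and> E v u)"

definition walk :: "'a set \<Rightarrow> ('a \<Rightarrow> 'a \<Rightarrow> bool) \<Rightarrow> 'a list \<Rightarrow> bool" where
  "walk V E p \<longleftrightarrow> p \<noteq> [] \<and> set p \<subseteq> V \<and> (\<forall>i. Suc i < length p \<longrightarrow> E (p ! i) (p ! Suc i))"

definition dist :: "'a set \<Rightarrow> ('a \<Rightarrow> 'a \<Rightarrow> bool) \<Rightarrow> 'a \<Rightarrow> 'a \<Rightarrow> nat" where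
  "dist V E u v = (LEAST n. \<exists>p. walk V E p \<and> hd p = u \<and> last p = v \<and> length p = Suc n)"

definition isometric_subgraph ::
  "'a set \<Rightarrow> ('a \<Rightarrow> 'a \<Rightarrow> bool) \<Rightarrow> 'a set \<Rightarrow> ('a \<Rightarrow> 'a \<Rightarrow> bool) \<Rightarrow> bool" where
  "isometric_subgraph V E W F \<longleftrightarrow> W \<subseteq> V \<and> (\<forall>u v. F u v \<longrightarrow> u \<in> W \<and> v \<in> W \<and> E u v)
     \<and> (\<forall>u\<in>W. \<forall>v\<in>W. dist W F u v = dist V E u v)"

definition cube_verts :: "nat \<Rightarrow> bool list set" where
  "cube_verts d = {xs. length xs = d}"

definition cube_adj :: "nat \<Rightarrow> bool list \<Rightarrow> bool list \<Rightarrow> bool" where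
  "cube_adj d xs ys \<longleftrightarrow> xs \<in> cube_verts d \<and> ys \<in> cube_verts d
     \<and> card {i. i < d \<and> xs ! i \<noteq> ys ! i} = 1"

definition partial_cube :: "'a set \<Rightarrow> ('a \<Rightarrow> 'a \<Rightarrow> bool) \<Rightarrow> bool" where
  "partial_cube V E \<longleftrightarrow> simple_graph V E \<and>
     (\<exists>d (\<phi> :: 'a \<Rightarrow> bool list). inj_on \<phi> V \<and>
        isometric_subgraph (cube_verts d) (cube_adj d) (\<phi> ` V)
          (\<lambda>a b. \<exists>u\<in>V. \<exists>v\<in>V. a = \<phi> u \<and> b = \<phi> v \<and> E u v))"

definition Theta :: "'a set \<Rightarrow> ('a \<Rightarrow> 'a \<Rightarrow> bool) \<Rightarrow> 'a \<times> 'a \<Rightarrow> 'a \<times> 'a \<Rightarrow> bool" where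
  "Theta V E e e' = (case (e, e') of ((x, y), (u, v)) \<Rightarrow>
     dist V E x u + dist V E y v \<noteq> dist V E x v + dist V E y u)"

text \<open>Theta-graceful labeling: bijection onto {0..n-1}; two edges get the same label
  iff they lie in the same Theta-class (i.e. are Theta-related, Theta being an
  equivalence on partial cubes).\<close>
definition theta_graceful :: "'a set \<Rightarrow> ('a \<Rightarrow> 'a \<Rightarrow> bool) \<Rightarrow> ('a \<Rightarrow> nat) \<Rightarrow> bool" where
  "theta_graceful V E f \<longleftrightarrow> bij_betw f V {0..<card V} \<and>
     (\<forall>x y u v. E x y \<longrightarrow> E u v \<longrightarrow>
        (Theta V E (x, y) (u, v) \<longleftrightarrow> \<bar>int (f x) - int (f y)\<bar> = \<bar>int (f u) - int (f v)\<bar>))"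

definition cyc4_adj :: "'a \<Rightarrow> 'a \<Rightarrow> 'a \<Rightarrow> 'a \<Rightarrow> 'a \<Rightarrow> 'a \<Rightarrow> bool" where
  "cyc4_adj c0 c1 c2 c3 a b \<longleftrightarrow>
     {a, b} = {c0, c1} \<or> {a, b} = {c1, c2} \<or> {a, b} = {c2, c3} \<or> {a, b} = {c3, c0}"

definition isometric_4cycle :: "'a set \<Rightarrow> ('a \<Rightarrow> 'a \<Rightarrow> bool) \<Rightarrow> 'a \<Rightarrow> 'a \<Rightarrow> 'a \<Rightarrow> 'a \<Rightarrow> bool" where
  "isometric_4cycle V E c0 c1 c2 c3 \<longleftrightarrow> distinct [c0, c1, c2, c3] \<and>
     isometric_subgraph V E {c0, c1, c2, c3} (cyc4_adj c0 c1 c2 c3)"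

end

theory Submission
  imports Defs
begin

text \<open>In an isometric 4-cycle \<open>c\<^sub>0c\<^sub>1c\<^sub>2c\<^sub>3\<close> the distances are those of the cycle itself, so opposite
  edges are \<open>\<Theta>\<close>-related and adjacent ones are not. A \<open>\<Theta>\<close>-graceful labeling therefore gives
  both pairs of opposite edges equal label differences, and injectivity of the labeling
  rules out the "crossed" solution, leaving \<open>f c\<^sub>0 + f c\<^sub>2 = f c\<^sub>1 + f c\<^sub>3\<close>. The hypothesis
  \<open>d(x,u) < d(x,v)\<close> fixes the orientation of two \<open>\<Theta>\<close>-related edges, which turns this identity
  into the claim.\<close>

lemma dist_le_walk_length:
  assumes "walk V E p" "hd p = u" "last p = v"
  shows "dist V E u v \<le> length p - 1"
  unfolding dist_def
  by (rule Least_le) (use assms in \<open>auto simp: walk_def intro!: exI[of _ p]\<close>)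

lemma dist_attained:
  assumes "walk V E p" "hd p = u" "last p = v"
  obtains q where "walk V E q" "hd q = u" "last q = v" "length q = Suc (dist V E u v)"
proof -
  have "\<exists>n p. walk V E p \<and> hd p = u \<and> last p = v \<and> length p = Suc n"
    using assms by (intro exI[of _ "length p - 1"] exI[of _ p]) (auto simp: walk_def)
  then have "\<exists>q. walk V E q \<and> hd q = u \<and> last q = v \<and> length q = Suc (dist V E u v)"
    unfolding dist_def by (rule LeastI_ex)
  with that show ?thesis by blast
qed

lemma dist_eq_0_imp_eq:
  assumes "walk V E p" "hd p = u" "last p = v" "dist V E u v = 0"
  shows "u = v"
proof -
  obtain q where "hd q = u" "last q = v" "length q = Suc (dist V E u v)"
    using dist_attained[OF assms(1-3)] by blast
  with assms(4) show ?thesis by (cases q) auto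
qed

lemma dist_eq_1_imp_adj:
  assumes "walk V E p" "hd p = u" "last p = v" "dist V E u v = 1"
  shows "E u v"
proof -
  obtain q where q: "walk V E q" "hd q = u" "last q = v" "length q = Suc (dist V E u v)"
    using dist_attained[OF assms(1-3)] by blast
  with assms(4) obtain a b where "q = [a, b]"
    by (cases q; cases "tl q") auto
  with q show ?thesis unfolding walk_def by auto
qed

lemma dist_self:
  assumes "a \<in> V"
  shows "dist V E a a = 0"
  using dist_le_walk_length[of V E "[a]"] assms by (simp add: walk_def)

lemma dist_eq_1_if_adj:
  assumes "a \<in> V" "b \<in> V" "E a b" "a \<noteq> b"
  shows "dist V E a b = 1"
proof -
  have walk: "walk V E [a, b]"
    using assms by (auto simp: walk_def less_Suc_eq)
  show ?thesis
    using dist_le_walk_length[OF walk] dist_eq_0_imp_eq[OF walk] assms(4) by fastforce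
qed

lemma dist_eq_2_if_path:
  assumes "a \<in> V" "b \<in> V" "c \<in> V" "E a b" "E b c" "a \<noteq> c" "\<not> E a c"
  shows "dist V E a c = 2"
proof -
  have walk: "walk V E [a, b, c]"
    using assms by (auto simp: walk_def less_Suc_eq nth_Cons split: nat.splits)
  show ?thesis
    using dist_le_walk_length[OF walk] dist_eq_0_imp_eq[OF walk] dist_eq_1_imp_adj[OF walk]
      assms(6,7) by fastforce
qed

lemma isometric_4cycle_in_graph:
  assumes "isometric_4cycle V E c0 c1 c2 c3"
  shows "{c0, c1, c2, c3} \<subseteq> V" and "cyc4_adj c0 c1 c2 c3 a b \<Longrightarrow> E a b"
  using assms unfolding isometric_4cycle_def isometric_subgraph_def by auto

lemma isometric_4cycle_dist:
  assumes "isometric_4cycle V E c0 c1 c2 c3"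
  shows "dist V E c0 c0 = 0" "dist V E c1 c1 = 0" "dist V E c2 c2 = 0" "dist V E c3 c3 = 0"
    "dist V E c0 c1 = 1" "dist V E c1 c0 = 1" "dist V E c1 c2 = 1" "dist V E c2 c1 = 1"
    "dist V E c2 c3 = 1" "dist V E c3 c2 = 1" "dist V E c3 c0 = 1" "dist V E c0 c3 = 1"
    "dist V E c0 c2 = 2" "dist V E c2 c0 = 2" "dist V E c1 c3 = 2" "dist V E c3 c1 = 2"
proof -
  let ?W = "{c0, c1, c2, c3}"
  let ?F = "cyc4_adj c0 c1 c2 c3"
  have distinct: "distinct [c0, c1, c2, c3]"
    and isometric: "\<And>a b. a \<in> ?W \<Longrightarrow> b \<in> ?W \<Longrightarrow> dist V E a b = dist ?W ?F a b"
    using assms unfolding isometric_4cycle_def isometric_subgraph_def by auto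
  have adj: "?F c0 c1" "?F c1 c0" "?F c1 c2" "?F c2 c1" "?F c2 c3" "?F c3 c2" "?F c3 c0" "?F c0 c3"
    by (auto simp: cyc4_adj_def)
  have nonadj: "\<not> ?F c0 c2" "\<not> ?F c2 c0" "\<not> ?F c1 c3" "\<not> ?F c3 c1"
    using distinct by (auto simp: cyc4_adj_def doubleton_eq_iff)
  show "dist V E c0 c0 = 0" "dist V E c1 c1 = 0" "dist V E c2 c2 = 0" "dist V E c3 c3 = 0"
    by (simp_all add: isometric dist_self)
  have dist_adjacent: "dist V E a b = Suc 0" if "a \<in> ?W" "b \<in> ?W" "?F a b" "a \<noteq> b" for a b
    using isometric[OF that(1,2)] dist_eq_1_if_adj[of a ?W b ?F, OF that] by simp
  show "dist V E c0 c1 = 1" "dist V E c1 c0 = 1" "dist V E c1 c2 = 1" "dist V E c2 c1 = 1"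
    "dist V E c2 c3 = 1" "dist V E c3 c2 = 1" "dist V E c3 c0 = 1" "dist V E c0 c3 = 1"
    using distinct adj by (auto intro!: dist_adjacent)
  show "dist V E c0 c2 = 2" "dist V E c2 c0 = 2" "dist V E c1 c3 = 2" "dist V E c3 c1 = 2"
    using distinct adj nonadj
      dist_eq_2_if_path[of c0 ?W c1 c2 ?F] dist_eq_2_if_path[of c2 ?W c1 c0 ?F]
      dist_eq_2_if_path[of c1 ?W c2 c3 ?F] dist_eq_2_if_path[of c3 ?W c2 c1 ?F]
    by (auto simp: isometric)
qed

lemma isometric_4cycle_Theta_opposite_edges:
  assumes "isometric_4cycle V E c0 c1 c2 c3"
  shows "Theta V E (c0, c1) (c3, c2)" and "Theta V E (c0, c3) (c1, c2)"
  by (simp_all add: Theta_def isometric_4cycle_dist[OF assms])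

text \<open>The two solutions of the absolute-value equations are \<open>a + c = b + d\<close> and \<open>b = d\<close>.\<close>

lemma abs_diff_opposite_eq_imp_diagonal_sums_eq:
  fixes a b c d :: int
  assumes "\<bar>a - b\<bar> = \<bar>d - c\<bar>" "\<bar>a - d\<bar> = \<bar>b - c\<bar>" "b \<noteq> d"
  shows "a + c = b + d"
  using assms by (auto simp: abs_if split: if_splits)

lemma theta_graceful_isometric_4cycle_diagonal_sums:
  assumes graceful: "theta_graceful V E f" and cycle: "isometric_4cycle V E c0 c1 c2 c3"
  shows "f c0 + f c2 = f c1 + f c3"
proof -
  note adj = isometric_4cycle_in_graph(2)[OF cycle, unfolded cyc4_adj_def]
  have labels: "\<lbrakk>E x y; E u v; Theta V E (x, y) (u, v)\<rbrakk> \<Longrightarrow>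
      \<bar>int (f x) - int (f y)\<bar> = \<bar>int (f u) - int (f v)\<bar>" for x y u v
    using graceful unfolding theta_graceful_def by blast
  have "f c1 \<noteq> f c3"
    using graceful isometric_4cycle_in_graph(1)[OF cycle] cycle
    unfolding theta_graceful_def bij_betw_def inj_on_def isometric_4cycle_def by auto
  moreover have "\<bar>int (f c0) - int (f c1)\<bar> = \<bar>int (f c3) - int (f c2)\<bar>"
    by (rule labels[OF adj adj isometric_4cycle_Theta_opposite_edges(1)[OF cycle]]) auto
  moreover have "\<bar>int (f c0) - int (f c3)\<bar> = \<bar>int (f c1) - int (f c2)\<bar>"
    by (rule labels[OF adj adj isometric_4cycle_Theta_opposite_edges(2)[OF cycle]]) auto
  ultimately show ?thesis
    using abs_diff_opposite_eq_imp_diagonal_sums_eq by fastforce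
qed

lemma cyc4_adj_iff:
  "cyc4_adj c0 c1 c2 c3 x y \<longleftrightarrow>
    (x, y) \<in> {(c0, c1), (c1, c0), (c1, c2), (c2, c1), (c2, c3), (c3, c2), (c3, c0), (c0, c3)}"
  by (auto simp: cyc4_adj_def doubleton_eq_iff)

lemma isometric_4cycle_Theta_oriented_cases:
  assumes "isometric_4cycle V E c0 c1 c2 c3"
    and "cyc4_adj c0 c1 c2 c3 x y" "cyc4_adj c0 c1 c2 c3 u v"
    and "Theta V E (x, y) (u, v)" "dist V E x u < dist V E x v"
  shows "(x = u \<and> y = v) \<or> ({x, v} = {c0, c2} \<and> {y, u} = {c1, c3})
    \<or> ({x, v} = {c1, c3} \<and> {y, u} = {c0, c2})"
  using assms(2,3) unfolding cyc4_adj_iff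
  by (elim insertE emptyE)
    (use assms(4,5) isometric_4cycle_dist[OF assms(1)] in \<open>simp_all add: Theta_def insert_commute\<close>)

theorem lemma1:
  fixes V :: "'a set" and E :: "'a \<Rightarrow> 'a \<Rightarrow> bool" and f :: "'a \<Rightarrow> nat"
    and c0 c1 c2 c3 x y u v :: 'a
  assumes "partial_cube V E"
    and "theta_graceful V E f"
    and "isometric_4cycle V E c0 c1 c2 c3"
    and "cyc4_adj c0 c1 c2 c3 x y"
    and "cyc4_adj c0 c1 c2 c3 u v"
    and "Theta V E (x, y) (u, v)"
    and "dist V E x u < dist V E x v"
  shows "f x + f v = f y + f u"
proof -
  have "f c0 + f c2 = f c1 + f c3"
    using assms(2,3) by (rule theta_graceful_isometric_4cycle_diagonal_sums)
  with isometric_4cycle_Theta_oriented_cases[OF assms(3-7)] show ?thesis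
    by (auto simp: doubleton_eq_iff)
qed

end
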